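(* Let $(Y_n)$ satisfy Condition 1 with constant $\alpha$, and fix an integer $a\ge1$. For $i\ge1$ let $\pi_i(n)$ be the probability that, in the leader election process started with $n$ players (stopped as soon as at most $a$ players remain), there is some round after which exactly $i$ players remain (i.e. $N_k=i$ for some $k$ up to the stopping time). Then for every $i\ge1$ there is a continuous, locally Lipschitz function $\psi_i$ on $(0,\infty)$ with $\psi_i(\alpha t)=\psi_i(t)$ such that $\pi_i(n)=\psi_i(n)+o(1)$ as $n\to\infty$.
   Context: Condition 1: $(Y_n)_{n\ge1}$ is a sequence of random variables with $1\le Y_n\le n$ for all $n$ and $\Pr(Y_n=n)<1$ for $n\ge2$, such that: (i) $\Pr(Y_n\le k)\ge\Pr(Y_{n+1}\le k)$ for all $n,k\ge1$; (ii) there are constants $\alpha\in(0,1)$, $\varepsilon>0$ and $\delta_n=O((\log n)^{-1-\varepsilon})$ with $\mathbb E Y_{n+1}-\mathbb E Y_n=\alpha+O(\delta_n)$; (iii) $\Pr(|Y_n-\alpha n|>\delta_n n)=O(n^{-2-\varepsilon})$. Leader election process: $N_0=n$ and $(N_k)$ is the Markov chain on $\{1,2,\dots\}$ with $\Pr(N_{k+1}=j\mid N_k=i)=\Pr(Y_i=j)$. *)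

theory Defs
  imports "HOL-Analysis.Analysis" "HOL-Probability.Probability" "HOL-Library.Landau_Symbols"
begin

definition condition1 :: "(nat \<Rightarrow> nat pmf) \<Rightarrow> real \<Rightarrow> bool" where
  "condition1 Y \<alpha> \<longleftrightarrow>
     (\<forall>n\<ge>1. set_pmf (Y n) \<subseteq> {1..n}) \<and>
     (\<forall>n\<ge>2. pmf (Y n) n < 1) \<and>
     (\<forall>n\<ge>1. \<forall>k\<ge>1. measure_pmf.prob (Y (Suc n)) {..k} \<le> measure_pmf.prob (Y n) {..k}) \<and>
     0 < \<alpha> \<and> \<alpha> < 1 \<and>
     (\<exists>\<epsilon>>0. \<exists>\<delta> :: nat \<Rightarrow> real.
        \<delta> \<in> O(\<lambda>n. (ln (real n)) powr (-1 - \<epsilon>)) \<and>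
        (\<lambda>n. measure_pmf.expectation (Y (Suc n)) real - measure_pmf.expectation (Y n) real - \<alpha>)
           \<in> O(\<delta>) \<and>
        (\<lambda>n. measure_pmf.prob (Y n) {k. \<bar>real k - \<alpha> * real n\<bar> > \<delta> n * real n})
           \<in> O(\<lambda>n. real n powr (-2 - \<epsilon>)))"

text \<open>Law of the first K+1 states (N_0,...,N_K) of the leader election chain started at n.\<close>
fun le_path :: "(nat \<Rightarrow> nat pmf) \<Rightarrow> nat \<Rightarrow> nat \<Rightarrow> nat list pmf" where
  "le_path Y n 0 = return_pmf [n]"
| "le_path Y n (Suc K) = bind_pmf (le_path Y n K) (\<lambda>xs. map_pmf (\<lambda>j. xs @ [j]) (Y (last xs)))"

text \<open>Event: some N_k = i with k up to the stopping time (all earlier states exceed a).\<close>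
definition hits_before_stop :: "nat \<Rightarrow> nat \<Rightarrow> nat list \<Rightarrow> bool" where
  "hits_before_stop a i xs \<longleftrightarrow> (\<exists>k<length xs. xs ! k = i \<and> (\<forall>l<k. xs ! l > a))"

text \<open>pi_i(n): probability of the (increasing) union over horizons K of these events.\<close>
definition visit_prob :: "(nat \<Rightarrow> nat pmf) \<Rightarrow> nat \<Rightarrow> nat \<Rightarrow> nat \<Rightarrow> real" where
  "visit_prob Y a i n = (SUP K. measure_pmf.prob (le_path Y n K) {xs. hits_before_stop a i xs})"

definition locally_lipschitz_on :: "real set \<Rightarrow> (real \<Rightarrow> real) \<Rightarrow> bool" where
  "locally_lipschitz_on S f \<longleftrightarrow> (\<forall>x\<in>S. \<exists>e>0. \<exists>L. L-lipschitz_on (cball x e \<inter> S) f)"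

end

theory Submission
  imports Defs "HOL-Real_Asymp.Real_Asymp"
begin

(*
  Fix i and write g(n) = \<pi>_i(n). Once n > max a i, the first step of the
  process gives the harmonic equation g(n) = \<Sum>_j P(Y_n = j) g(j), and 0 \<le> g \<le> 1.
  The theorem therefore follows from a statement about an arbitrary bounded function that
  is harmonic for a kernel satisfying Condition 1:
  (1) Subtracting the equations for n+1 and n and summing by parts gives
      incr(n) \<le> \<Sum>_k incr(k) w(n,k) for the increments incr(k) = |g(k+1) - g(k)|, where the
      weights w(n,k) = P(Y_{n+1} > k) - P(Y_n > k) are nonnegative by stochastic monotonicity,
      have total mass E Y_{n+1} - E Y_n = \<alpha> + O(\<delta>_n), and concentrate near k = \<alpha> n.
  (2) A strong induction with the slowly varying weight exp(-K (ln x)^(-\<epsilon>)) shows incr(k) = O(1/k).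
  (3) Averaging over Y_n then gives g(n) - g(\<lfloor>\<alpha> n\<rfloor>) = O((ln n)^(-1-\<epsilon>)), which is summable
      along geometric sequences; hence \<psi>(t) = lim_k g(\<lfloor>t / \<alpha>^k\<rfloor>) exists, satisfies
      \<psi>(\<alpha> t) = \<psi>(t), is Lipschitz on every [r, \<infinity>) with r > 0, and g(n) - \<psi>(n) \<rightarrow> 0.
  The file treats the path law of the process first, then some real inequalities, then the
  kernel estimates (locale election_kernel) and the harmonic functions (locale
  bounded_harmonic), and derives the theorem at the end.
*)

subsection \<open>The visit probability is harmonic\<close>

lemma prob_bind_finite:
  assumes "finite (set_pmf M)"
  shows "measure_pmf.prob (bind_pmf M N) X = (\<Sum>x\<in>set_pmf M. pmf M x * measure_pmf.prob (N x) X)"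
proof -
  have "emeasure (measure_pmf (bind_pmf M N)) X = (\<integral>\<^sup>+x. emeasure (N x) X \<partial>M)" by simp
  also have "\<dots> = (\<Sum>x\<in>set_pmf M. emeasure (N x) X * pmf M x)"
    using assms by (intro nn_integral_measure_pmf_finite) auto
  also have "\<dots> = (\<Sum>x\<in>set_pmf M. ennreal (pmf M x * measure_pmf.prob (N x) X))"
    by (intro sum.cong refl) (subst ennreal_mult, auto simp: measure_pmf.emeasure_eq_measure mult.commute)
  also have "\<dots> = ennreal (\<Sum>x\<in>set_pmf M. pmf M x * measure_pmf.prob (N x) X)"
    by (rule sum_ennreal) simp
  finally show ?thesis
    by (simp add: measure_pmf.emeasure_eq_measure sum_nonneg)
qed

lemma le_path_set:
  "xs \<in> set_pmf (le_path Y n K) \<Longrightarrow> length xs = Suc K \<and> hd xs = n"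
proof (induction K arbitrary: xs)
  case 0 then show ?case by simp
next
  case (Suc K)
  then obtain ys j where "ys \<in> set_pmf (le_path Y n K)" "xs = ys @ [j]" by auto
  with Suc.IH[of ys] show ?case by (cases ys) auto
qed

(* First-step decomposition of the path law (le_path is defined by last-step extension). *)
lemma le_path_Suc_first:
  "le_path Y n (Suc K) = bind_pmf (Y n) (\<lambda>j. map_pmf ((#) n) (le_path Y j K))"
proof (induction K arbitrary: n)
  case 0
  show ?case by (simp add: bind_return_pmf map_pmf_def)
next
  case (Suc K)
  have "le_path Y n (Suc (Suc K)) = bind_pmf (le_path Y n (Suc K))
          (\<lambda>xs. map_pmf (\<lambda>j. xs @ [j]) (Y (last xs)))" by simp
  also have "\<dots> = bind_pmf (Y n) (\<lambda>j. bind_pmf (map_pmf ((#) n) (le_path Y j K))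
          (\<lambda>xs. map_pmf (\<lambda>j. xs @ [j]) (Y (last xs))))"
    by (simp only: Suc.IH bind_assoc_pmf)
  also have "\<dots> = bind_pmf (Y n) (\<lambda>j. map_pmf ((#) n) (le_path Y j (Suc K)))"
  proof (intro bind_pmf_cong refl)
    fix j
    have "bind_pmf (map_pmf ((#) n) (le_path Y j K)) (\<lambda>xs. map_pmf (\<lambda>j. xs @ [j]) (Y (last xs)))
        = bind_pmf (le_path Y j K) (\<lambda>ys. map_pmf (\<lambda>j'. (n # ys) @ [j']) (Y (last (n # ys))))"
      by (simp add: bind_map_pmf)
    also have "\<dots> = bind_pmf (le_path Y j K) (\<lambda>ys. map_pmf ((#) n) (map_pmf (\<lambda>j'. ys @ [j']) (Y (last ys))))"
    proof (intro bind_pmf_cong refl)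
      fix ys assume "ys \<in> set_pmf (le_path Y j K)"
      then have "ys \<noteq> []" using le_path_set[of ys Y j K] by auto
      then show "map_pmf (\<lambda>j'. (n # ys) @ [j']) (Y (last (n # ys))) =
                 map_pmf ((#) n) (map_pmf (\<lambda>j'. ys @ [j']) (Y (last ys)))"
        by (simp add: pmf.map_comp o_def)
    qed
    also have "\<dots> = map_pmf ((#) n) (le_path Y j (Suc K))"
      by (simp add: map_bind_pmf)
    finally show "bind_pmf (map_pmf ((#) n) (le_path Y j K)) (\<lambda>xs. map_pmf (\<lambda>j. xs @ [j]) (Y (last xs)))
        = map_pmf ((#) n) (le_path Y j (Suc K))" .
  qed
  finally show ?case .
qed

lemma hits_before_stop_Cons:
  assumes "n \<noteq> i" "n > a"
  shows "hits_before_stop a i (n # ys) \<longleftrightarrow> hits_before_stop a i ys"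
proof
  assume "hits_before_stop a i (n # ys)"
  then obtain k where k: "k < length (n # ys)" "(n # ys) ! k = i" "\<forall>l<k. (n # ys) ! l > a"
    unfolding hits_before_stop_def by blast
  then obtain k' where "k = Suc k'" using assms by (cases k) auto
  with k show "hits_before_stop a i ys" unfolding hits_before_stop_def
    by (intro exI[of _ k']) (auto dest: spec[of _ "Suc _"])
next
  assume "hits_before_stop a i ys"
  then obtain k where k: "k < length ys" "ys ! k = i" "\<forall>l<k. ys ! l > a"
    unfolding hits_before_stop_def by blast
  show "hits_before_stop a i (n # ys)" unfolding hits_before_stop_def
  proof (intro exI[of _ "Suc k"] conjI allI impI)
    fix l assume "l < Suc k" then show "(n # ys) ! l > a" using k assms by (cases l) auto
  qed (use k in auto)
qed

definition visit_prob_upto :: "(nat \<Rightarrow> nat pmf) \<Rightarrow> nat \<Rightarrow> nat \<Rightarrow> nat \<Rightarrow> nat \<Rightarrow> real" where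
  "visit_prob_upto Y a i K n = measure_pmf.prob (le_path Y n K) {xs. hits_before_stop a i xs}"

lemma visit_prob_upto_target: "visit_prob_upto Y a i K i = 1"
  unfolding visit_prob_upto_def
proof (subst measure_pmf.prob_eq_1)
  show "AE x in measure_pmf (le_path Y i K). x \<in> {xs. hits_before_stop a i xs}"
  proof (rule AE_pmfI)
    fix xs assume "xs \<in> set_pmf (le_path Y i K)"
    then have "length xs = Suc K" "hd xs = i" using le_path_set by blast+
    then show "xs \<in> {xs. hits_before_stop a i xs}"
      unfolding hits_before_stop_def by (intro CollectI exI[of _ 0]) (cases xs; auto)
  qed
qed auto

lemma visit_prob_upto_stopped: assumes "n \<le> a" "n \<noteq> i" shows "visit_prob_upto Y a i K n = 0"
  unfolding visit_prob_upto_def measure_pmf_zero_iff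
proof auto
  fix xs assume "xs \<in> set_pmf (le_path Y n K)" "hits_before_stop a i xs"
  then have "length xs = Suc K" "hd xs = n" using le_path_set by blast+
  moreover from \<open>hits_before_stop a i xs\<close> obtain k where "k < length xs" "xs ! k = i" "\<forall>l<k. xs ! l > a"
    unfolding hits_before_stop_def by blast
  ultimately show False using assms
    by (cases xs; cases k) (auto dest: spec[of _ 0])
qed

lemma visit_prob_upto_Suc:
  assumes "n \<noteq> i" "n > a" "finite (set_pmf (Y n))"
  shows "visit_prob_upto Y a i (Suc K) n = (\<Sum>j\<in>set_pmf (Y n). pmf (Y n) j * visit_prob_upto Y a i K j)"
proof -
  have "(#) n -` {xs. hits_before_stop a i xs} = {xs. hits_before_stop a i xs}"
    using hits_before_stop_Cons[OF assms(1,2)] by auto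
  then show ?thesis
    unfolding visit_prob_upto_def le_path_Suc_first by (simp add: prob_bind_finite[OF assms(3)])
qed

lemma visit_prob_upto_mono:
  assumes fin: "\<And>n. n > a \<Longrightarrow> finite (set_pmf (Y n))"
  shows "visit_prob_upto Y a i K n \<le> visit_prob_upto Y a i (Suc K) n"
proof (induction K arbitrary: n)
  case 0
  show ?case
  proof (cases "n = i")
    case False
    then have "visit_prob_upto Y a i 0 n = 0"
      unfolding visit_prob_upto_def measure_pmf_zero_iff by (auto simp: hits_before_stop_def)
    then show ?thesis unfolding visit_prob_upto_def by simp
  qed (simp add: visit_prob_upto_target)
next
  case (Suc K)
  consider "n = i" | "n \<noteq> i" "n \<le> a" | "n \<noteq> i" "n > a" by linarith
  then show ?case
  proof cases
    case 3
    then show ?thesis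
      using fin[OF \<open>n > a\<close>] by (simp add: visit_prob_upto_Suc sum_mono mult_left_mono Suc.IH)
  qed (simp_all add: visit_prob_upto_target visit_prob_upto_stopped)
qed

lemma visit_prob_upto_bounds: "0 \<le> visit_prob_upto Y a i K n" "visit_prob_upto Y a i K n \<le> 1"
  unfolding visit_prob_upto_def by auto

lemma visit_prob_upto_limit:
  assumes fin: "\<And>n. n > a \<Longrightarrow> finite (set_pmf (Y n))"
  shows "(\<lambda>K. visit_prob_upto Y a i K n) \<longlonglongrightarrow> visit_prob Y a i n"
proof -
  have "(\<lambda>K. visit_prob_upto Y a i K n) \<longlonglongrightarrow> (SUP K. visit_prob_upto Y a i K n)"
    by (rule LIMSEQ_incseq_SUP)
      (auto intro!: incseq_SucI visit_prob_upto_mono fin bdd_aboveI[of _ 1] visit_prob_upto_bounds)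
  then show ?thesis unfolding visit_prob_def visit_prob_upto_def by simp
qed

lemma visit_prob_first_step:
  assumes fin: "\<And>n. n > a \<Longrightarrow> finite (set_pmf (Y n))" and "n \<noteq> i" "n > a"
  shows "visit_prob Y a i n = (\<Sum>j\<in>set_pmf (Y n). pmf (Y n) j * visit_prob Y a i j)"
proof -
  have "(\<lambda>K. visit_prob_upto Y a i (Suc K) n) \<longlonglongrightarrow> visit_prob Y a i n"
    using visit_prob_upto_limit[OF fin] by (rule LIMSEQ_Suc)
  moreover have "(\<lambda>K. visit_prob_upto Y a i (Suc K) n)
      \<longlonglongrightarrow> (\<Sum>j\<in>set_pmf (Y n). pmf (Y n) j * visit_prob Y a i j)"
    unfolding visit_prob_upto_Suc[where Y=Y and a=a and i=i, OF assms(2,3) fin[OF assms(3)]]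
    by (intro tendsto_intros visit_prob_upto_limit fin)
  ultimately show ?thesis by (rule LIMSEQ_unique)
qed

lemma visit_prob_bounds:
  assumes fin: "\<And>n. n > a \<Longrightarrow> finite (set_pmf (Y n))"
  shows "0 \<le> visit_prob Y a i n \<and> visit_prob Y a i n \<le> 1"
proof -
  have L: "(\<lambda>K. visit_prob_upto Y a i K n) \<longlonglongrightarrow> visit_prob Y a i n"
    by (rule visit_prob_upto_limit[OF fin])
  show ?thesis
    using LIMSEQ_le_const[OF L] LIMSEQ_le_const2[OF L] visit_prob_upto_bounds by blast
qed

lemma powr_diff_ineq:
  fixes u v e :: real
  assumes "0 < u" "u \<le> v" "e > 0"
  shows "u powr (-e) - v powr (-e) \<ge> e * (v - u) * v powr (-1-e)"
proof -
  define r where "r = u / v"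
  have v: "v > 0" using assms by simp
  have r: "0 < r" "r \<le> 1" using assms v by (auto simp: r_def field_simps)
  have uu: "u powr (-e) = v powr (-e) * r powr (-e)"
    using v r by (simp add: r_def powr_mult[symmetric])
  have rin: "r powr (-e) \<ge> 1 + e * (1 - r)"
  proof -
    have "r powr (-e) = exp (-e * ln r)" using r by (simp add: powr_def)
    also have "\<dots> \<ge> 1 + (-e * ln r)" by (rule exp_ge_add_one_self)
    finally have "r powr (-e) \<ge> 1 - e * ln r" by simp
    moreover have "e * ln r \<le> e * (r - 1)"
      using r assms(3) by (intro mult_left_mono ln_le_minus_one) auto
    ultimately show ?thesis by (simp add: algebra_simps)
  qed
  have "u powr (-e) - v powr (-e) = v powr (-e) * (r powr (-e) - 1)"
    unfolding uu by (simp add: right_diff_distrib)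
  also have "\<dots> \<ge> v powr (-e) * (e * (1 - r))"
    by (intro mult_left_mono) (use rin in auto)
  also have "v powr (-e) * (e * (1 - r)) = e * (v - u) * v powr (-1-e)"
    using v by (simp add: r_def field_simps powr_diff powr_minus)
  finally show ?thesis .
qed

(* The slowly varying weight exp(-K (ln x)^(-e)) used in the induction bounding the increments:
   it is increasing, at most 1, and grows by a factor 1 + \<Theta>((ln x)^(-1-e)) from \<beta> x to x. *)
definition log_weight :: "real \<Rightarrow> real \<Rightarrow> real \<Rightarrow> real" where
  "log_weight K e x = exp (- K * ln x powr (-e))"

lemma log_weight_pos: "log_weight K e x > 0"
  unfolding log_weight_def by simp

lemma log_weight_le1: "K \<ge> 0 \<Longrightarrow> log_weight K e x \<le> 1"
  unfolding log_weight_def by simp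

lemma log_weight_mono:
  assumes "K \<ge> 0" "e > 0" "1 < x" "x \<le> y"
  shows "log_weight K e x \<le> log_weight K e y"
proof -
  have "ln x > 0" "ln x \<le> ln y" using assms by auto
  then have "ln y powr (-e) \<le> ln x powr (-e)" using assms by (intro powr_mono2') auto
  then show ?thesis unfolding log_weight_def using assms(1) by (simp add: mult_left_mono)
qed

lemma log_weight_ratio:
  assumes "K \<ge> 0" "e > 0" "0 < \<beta>" "\<beta> < 1" "1 < \<beta> * x"
  shows "log_weight K e x \<ge> log_weight K e (\<beta> * x) * (1 + K * e * (- ln \<beta>) * ln x powr (-1-e))"
proof -
  have x: "x > 0" using assms by (smt (verit) mult_nonneg_nonpos)
  define u where "u = ln (\<beta> * x)"
  define v where "v = ln x"
  have u: "u > 0" using assms unfolding u_def by simp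
  have uv: "u = ln \<beta> + v" unfolding u_def v_def using assms x by (simp add: ln_mult)
  have "ln \<beta> < 0" using assms by simp
  then have "u \<le> v" using uv by simp
  have D: "u powr (-e) - v powr (-e) \<ge> e * (- ln \<beta>) * v powr (-1-e)"
    using powr_diff_ineq[OF u \<open>u \<le> v\<close> assms(2)] uv by simp
  have "log_weight K e x = log_weight K e (\<beta> * x) * exp (K * (u powr (-e) - v powr (-e)))"
    unfolding log_weight_def u_def v_def by (simp add: exp_add[symmetric] algebra_simps)
  also have "\<dots> \<ge> log_weight K e (\<beta> * x) * (1 + K * (u powr (-e) - v powr (-e)))"
    by (intro mult_left_mono exp_ge_add_one_self less_imp_le[OF log_weight_pos])
  finally have A: "log_weight K e x \<ge> log_weight K e (\<beta> * x) * (1 + K * (u powr (-e) - v powr (-e)))" .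
  have "K * (e * (- ln \<beta>) * v powr (-1-e)) \<le> K * (u powr (-e) - v powr (-e))"
    using D assms(1) by (intro mult_left_mono) auto
  then have "log_weight K e (\<beta> * x) * (1 + K * e * (- ln \<beta>) * ln x powr (-1-e))
      \<le> log_weight K e (\<beta> * x) * (1 + K * (u powr (-e) - v powr (-e)))"
    unfolding v_def by (intro mult_left_mono less_imp_le[OF log_weight_pos]) (simp add: mult_ac)
  then show ?thesis using A by linarith
qed

(* The factor (\<alpha> + C1 D)/(\<alpha> - D) by which the total weight may exceed \<alpha>, when D \<le> C2 L. *)
lemma drift_ratio:
  fixes \<alpha> C1 C2 D L :: real
  assumes "0 < \<alpha>" "0 \<le> C1" "0 \<le> D" "D \<le> C2 * L" "D \<le> \<alpha> / 4"
  shows "(\<alpha> + C1 * D) / (\<alpha> - D) \<le> 1 + 2 * (C1 + 1) * C2 / \<alpha> * L"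
proof -
  have aD: "\<alpha> - D > 0" using assms by linarith
  have "2 * (C1 + 1) * D / \<alpha> \<le> 2 * (C1 + 1) * C2 / \<alpha> * L"
    using assms by (simp add: divide_right_mono mult_left_mono mult.assoc)
  then have up: "(1 + 2 * (C1 + 1) * D / \<alpha>) * (\<alpha> - D) \<le> (1 + 2 * (C1 + 1) * C2 / \<alpha> * L) * (\<alpha> - D)"
    using aD by (intro mult_right_mono) auto
  have low: "\<alpha> + C1 * D \<le> (1 + 2 * (C1 + 1) * D / \<alpha>) * (\<alpha> - D)"
  proof -
    have "(C1 + 1) * D * (2 * D / \<alpha>) \<le> (C1 + 1) * D * 1"
      using assms by (intro mult_left_mono) (auto simp: divide_le_eq)
    then show ?thesis using assms(1) by (simp add: field_simps)
  qed
  have "\<alpha> + C1 * D \<le> (1 + 2 * (C1 + 1) * C2 / \<alpha> * L) * (\<alpha> - D)"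
    using up low by linarith
  then show ?thesis using aD by (simp add: pos_divide_le_eq)
qed

lemma sum_by_parts_nat:
  fixes q h :: "nat \<Rightarrow> real"
  shows "(\<Sum>j\<le>N. q j * h j) = h 0 * (\<Sum>j\<le>N. q j) + (\<Sum>k<N. (h (Suc k) - h k) * (\<Sum>j\<in>{k<..N}. q j))"
proof (induction N)
  case 0 then show ?case by simp
next
  case (Suc N)
  have split: "\<And>k. k < Suc N \<Longrightarrow> {k<..Suc N} = insert (Suc N) {k<..N}" by auto
  have "(\<Sum>k<Suc N. (h (Suc k) - h k) * (\<Sum>j\<in>{k<..Suc N}. q j))
      = (\<Sum>k<Suc N. (h (Suc k) - h k) * (q (Suc N) + (\<Sum>j\<in>{k<..N}. q j)))"
    by (intro sum.cong refl) (simp add: split)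
  also have "\<dots> = q (Suc N) * (\<Sum>k<Suc N. (h (Suc k) - h k)) + (\<Sum>k<Suc N. (h (Suc k) - h k) * (\<Sum>j\<in>{k<..N}. q j))"
    by (simp add: distrib_left sum.distrib sum_distrib_left mult_ac)
  also have "(\<Sum>k<Suc N. (h (Suc k) - h k)) = h (Suc N) - h 0" by (rule sum_lessThan_telescope)
  also have "(\<Sum>k<Suc N. (h (Suc k) - h k) * (\<Sum>j\<in>{k<..N}. q j)) = (\<Sum>k<N. (h (Suc k) - h k) * (\<Sum>j\<in>{k<..N}. q j))"
    by simp
  finally show ?case using Suc.IH by (simp add: algebra_simps)
qed

lemma convergent_summable_increments:
  fixes a e :: "nat \<Rightarrow> real"
  assumes st: "\<And>k. \<bar>a (Suc k) - a k\<bar> \<le> e k" and se: "summable e"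
  shows "convergent a" "\<bar>lim a - a 0\<bar> \<le> suminf e"
proof -
  have sa: "summable (\<lambda>k. \<bar>a (Suc k) - a k\<bar>)"
    by (rule summable_comparison_test'[OF se]) (use st in auto)
  have "(\<lambda>n. a 0 + (\<Sum>k<n. a (Suc k) - a k)) \<longlonglongrightarrow> a 0 + (\<Sum>k. a (Suc k) - a k)"
    by (intro tendsto_intros summable_LIMSEQ summable_rabs_cancel[OF sa])
  then have L: "a \<longlonglongrightarrow> a 0 + (\<Sum>k. a (Suc k) - a k)" by (simp add: sum_lessThan_telescope)
  then show "convergent a" by (rule convergentI)
  have "\<bar>lim a - a 0\<bar> = \<bar>\<Sum>k. a (Suc k) - a k\<bar>" using limI[OF L] by simp
  also have "\<dots> \<le> (\<Sum>k. \<bar>a (Suc k) - a k\<bar>)" by (rule summable_rabs[OF sa])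
  also have "\<dots> \<le> suminf e" by (rule suminf_le[OF st sa se])
  finally show "\<bar>lim a - a 0\<bar> \<le> suminf e" .
qed

lemma summable_shifted_powr:
  fixes b p :: real
  assumes "b > 0" "p < -1"
  shows "summable (\<lambda>k. (1 + real (Suc k) * b) powr p)"
proof (rule summable_comparison_test')
  have "summable (\<lambda>n. real n powr p)" using summable_real_powr_iff[of p] assms by simp
  then show "summable (\<lambda>k. b powr p * real (Suc k) powr p)"
    by (intro summable_mult) (subst summable_Suc_iff)
  fix k :: nat
  have "(1 + real (Suc k) * b) powr p \<le> (real (Suc k) * b) powr p"
    using assms by (intro powr_mono2') auto
  also have "\<dots> = b powr p * real (Suc k) powr p" using assms by (simp add: powr_mult mult.commute)
  finally show "norm ((1 + real (Suc k) * b) powr p) \<le> b powr p * real (Suc k) powr p" by simp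
qed

(* Splitting the decay (s + (k+1) b)^(-1-e) into a factor s^(-e/2) that is small for large
   starting points and a factor summable in k. *)
lemma powr_split_bound:
  fixes s b x e :: real and k :: nat
  assumes "s \<ge> 1" "b > 0" "e > 0" "s + real (Suc k) * b \<le> x"
  shows "x powr (-1-e) \<le> s powr (-e/2) * (1 + real (Suc k) * b) powr (-1-e/2)"
proof -
  define z where "z = s + real (Suc k) * b"
  have z: "z > 0" unfolding z_def using assms by (simp add: add_pos_nonneg)
  have "x powr (-1-e) \<le> z powr (-1-e)"
    using assms z unfolding z_def by (intro powr_mono2') auto
  also have "\<dots> = z powr (-e/2) * z powr (-1-e/2)"
    by (subst powr_add[symmetric]) (simp add: algebra_simps)
  also have "\<dots> \<le> s powr (-e/2) * (1 + real (Suc k) * b) powr (-1-e/2)"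
    unfolding z_def using assms z unfolding z_def
    by (intro mult_mono powr_mono2') (auto intro: add_pos_nonneg)
  finally show ?thesis .
qed

subsection \<open>Estimates for a kernel satisfying Condition 1\<close>

(* Condition 1 with its O-bounds made explicit: from N0 on, the drift of the means is at most
   \<alpha> + C1 D(n), the concentration radius is D(n) \<le> C2 (ln n)^(-1-\<epsilon>), and Y_n leaves the window
   \<alpha> n \<plusminus> D(n) n with probability at most C3 n^(-2-\<epsilon>). *)
locale election_kernel =
  fixes Y :: "nat \<Rightarrow> nat pmf" and \<alpha> \<epsilon> :: real and D :: "nat \<Rightarrow> real"
    and C1 C2 C3 :: real and N0 :: nat
  assumes supp: "\<And>n. n \<ge> 1 \<Longrightarrow> set_pmf (Y n) \<subseteq> {1..n}"
    and dom: "\<And>n k. n \<ge> 1 \<Longrightarrow> k \<ge> 1 \<Longrightarrow>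
        measure_pmf.prob (Y (Suc n)) {..k} \<le> measure_pmf.prob (Y n) {..k}"
    and alpha: "0 < \<alpha>" "\<alpha> < 1" and eps: "\<epsilon> > 0"
    and D_nonneg: "\<And>n. D n \<ge> 0"
    and drift: "\<And>n. n \<ge> N0 \<Longrightarrow>
        measure_pmf.expectation (Y (Suc n)) real - measure_pmf.expectation (Y n) real \<le> \<alpha> + C1 * D n"
    and D_small: "\<And>n. n \<ge> N0 \<Longrightarrow> D n \<le> C2 * ln (real n) powr (-1-\<epsilon>)"
    and tail: "\<And>n. n \<ge> N0 \<Longrightarrow>
        measure_pmf.prob (Y n) {k. \<bar>real k - \<alpha> * real n\<bar> > D n * real n} \<le> C3 * real n powr (-2-\<epsilon>)"
    and const_signs: "C1 \<ge> 0" "C2 > 0" "C3 \<ge> 0"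
begin

abbreviation P :: "nat \<Rightarrow> nat set \<Rightarrow> real" where "P n A \<equiv> measure_pmf.prob (Y n) A"

lemma pmf_out: "n \<ge> 1 \<Longrightarrow> j > n \<Longrightarrow> pmf (Y n) j = 0"
  using supp[of n] by (auto simp: set_pmf_eq)

lemma sum_extend: assumes "n \<ge> 1" "N \<ge> n"
  shows "(\<Sum>j\<le>N. pmf (Y n) j * h j) = (\<Sum>j\<le>n. pmf (Y n) j * h j)"
  by (rule sum.mono_neutral_right) (use assms pmf_out in auto)

lemma P_finite_sum: assumes "n \<ge> 1" "A \<subseteq> {..N}" "N \<ge> n"
  shows "P n A = (\<Sum>j\<in>A. pmf (Y n) j)"
  using assms finite_subset by (intro measure_measure_pmf_finite) auto

lemma P_restrict: assumes "n \<ge> 1" "N \<ge> n"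
  shows "P n A = P n (A \<inter> {..N})"
proof -
  have "P n A = P n (A \<inter> set_pmf (Y n))" by (simp add: measure_Int_set_pmf)
  also have "A \<inter> set_pmf (Y n) = (A \<inter> {..N}) \<inter> set_pmf (Y n)" using supp[OF assms(1)] assms by auto
  also have "P n \<dots> = P n (A \<inter> {..N})" by (simp add: measure_Int_set_pmf)
  finally show ?thesis .
qed

lemma sum_pmf_one: assumes "n \<ge> 1" "N \<ge> n" shows "(\<Sum>j\<le>N. pmf (Y n) j) = 1"
  using P_restrict[OF assms, of UNIV] P_finite_sum[OF assms(1) _ assms(2), of "{..N}"] by simp

lemma expectation_sum: assumes "n \<ge> 1" "N \<ge> n"
  shows "measure_pmf.expectation (Y n) h = (\<Sum>j\<le>N. pmf (Y n) j * h j)"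
  using assms supp[OF assms(1)]
  by (subst integral_measure_pmf_real[where A="{..N}"]) (auto simp: mult.commute)

lemma sum_by_parts_tails: assumes "n \<ge> 1" "N \<ge> n"
  shows "(\<Sum>j\<le>N. pmf (Y n) j * h j) = h 0 + (\<Sum>k<N. (h (Suc k) - h k) * P n {k<..})"
proof -
  have "P n {k<..} = (\<Sum>j\<in>{k<..N}. pmf (Y n) j)" for k
  proof -
    have "P n {k<..} = P n ({k<..} \<inter> {..N})" using P_restrict assms by blast
    also have "{k<..} \<inter> {..N} = {k<..N}" by auto
    also have "P n {k<..N} = (\<Sum>j\<in>{k<..N}. pmf (Y n) j)"
      by (rule P_finite_sum[OF assms(1) _ assms(2)]) auto
    finally show ?thesis .
  qed
  then show ?thesis using sum_by_parts_nat[of "pmf (Y n)" h N] sum_pmf_one[OF assms] by simp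
qed

(* The weight w n k = P(Y_{n+1} > k) - P(Y_n > k) of the increment at k in the difference of
   the averages over Y_{n+1} and Y_n; it is nonnegative by stochastic monotonicity. *)
definition w :: "nat \<Rightarrow> nat \<Rightarrow> real" where
  "w n k = P (Suc n) {k<..} - P n {k<..}"

lemma w_alt: "w n k = P n {..k} - P (Suc n) {..k}"
proof -
  have "P m {k<..} = 1 - P m {..k}" for m
    using measure_pmf.prob_compl[of "{..k}" "Y m"] by (simp add: Compl_eq_Diff_UNIV[symmetric] Compl_atMost)
  then show ?thesis unfolding w_def by simp
qed

lemma w_nonneg: assumes "n \<ge> 1" shows "w n k \<ge> 0"
proof (cases "k \<ge> 1")
  case True then show ?thesis unfolding w_alt using dom[OF assms True] by simp
next
  case False
  then have "k = 0" by simp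
  have "P m {..0} = 0" if "m \<ge> 1" for m
    using supp[OF that] by (subst measure_pmf_zero_iff) auto
  then show ?thesis unfolding w_alt using \<open>k = 0\<close> assms by simp
qed

lemma average_difference: assumes "n \<ge> 1"
  shows "(\<Sum>j\<le>Suc n. pmf (Y (Suc n)) j * h j) - (\<Sum>j\<le>n. pmf (Y n) j * h j)
       = (\<Sum>k<Suc n. (h (Suc k) - h k) * w n k)"
proof -
  have e1: "(\<Sum>j\<le>n. pmf (Y n) j * h j) = (\<Sum>j\<le>Suc n. pmf (Y n) j * h j)"
    using sum_extend[OF assms, of "Suc n"] by simp
  have e2: "(\<Sum>j\<le>Suc n. pmf (Y n) j * h j) = h 0 + (\<Sum>k<Suc n. (h (Suc k) - h k) * P n {k<..})"
    using sum_by_parts_tails[OF assms, of "Suc n" h] by simp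
  have e3: "(\<Sum>j\<le>Suc n. pmf (Y (Suc n)) j * h j) = h 0 + (\<Sum>k<Suc n. (h (Suc k) - h k) * P (Suc n) {k<..})"
    using sum_by_parts_tails[of "Suc n" "Suc n" h] by simp
  have "(\<Sum>j\<le>Suc n. pmf (Y (Suc n)) j * h j) - (\<Sum>j\<le>n. pmf (Y n) j * h j)
     = (\<Sum>k<Suc n. (h (Suc k) - h k) * P (Suc n) {k<..}) - (\<Sum>k<Suc n. (h (Suc k) - h k) * P n {k<..})"
    unfolding e1 e2 e3 by simp
  also have "\<dots> = (\<Sum>k<Suc n. (h (Suc k) - h k) * w n k)"
    unfolding w_def by (simp add: sum_subtractf[symmetric] right_diff_distrib)
  finally show ?thesis .
qed

lemma sum_w: assumes "n \<ge> 1"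
  shows "(\<Sum>k<Suc n. w n k) = measure_pmf.expectation (Y (Suc n)) real - measure_pmf.expectation (Y n) real"
  using average_difference[OF assms, of real] expectation_sum[of "Suc n" "Suc n" real]
    expectation_sum[OF assms order.refl, of real] by simp

definition atypical :: "nat \<Rightarrow> nat set" where
  "atypical n = {k. \<bar>real k - \<alpha> * real n\<bar> > D n * real n}"

(* The range of k where w n k may be large. *)
definition window :: "nat \<Rightarrow> nat set" where
  "window n = {k\<in>{..<Suc n}. (\<alpha> - D n) * real n \<le> real k \<and> real k < (\<alpha> + D (Suc n)) * real (Suc n)}"

lemma w_outside_window:
  assumes "n \<ge> 1" "k \<notin> window n" "k < Suc n"
  shows "w n k \<le> P n (atypical n) + P (Suc n) (atypical (Suc n))"
proof (cases "real k < (\<alpha> - D n) * real n")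
  case True
  have "{..k} \<subseteq> atypical n"
  proof
    fix j assume "j \<in> {..k}"
    then have "\<alpha> * real n - real j > D n * real n" using True by (simp add: algebra_simps)
    then show "j \<in> atypical n" unfolding atypical_def by simp
  qed
  then have "w n k \<le> P n (atypical n)"
    unfolding w_alt by (smt (verit) measure_nonneg measure_pmf.finite_measure_mono sets_measure_pmf UNIV_I)
  then show ?thesis by (simp add: add_increasing2)
next
  case False
  then have "real k \<ge> (\<alpha> + D (Suc n)) * real (Suc n)" using assms unfolding window_def by auto
  then have "{k<..} \<subseteq> atypical (Suc n)"
    by (auto simp: atypical_def algebra_simps)
  then have "w n k \<le> P (Suc n) (atypical (Suc n))"
    unfolding w_def by (smt (verit) measure_nonneg measure_pmf.finite_measure_mono sets_measure_pmf UNIV_I)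
  then show ?thesis by (simp add: add_increasing)
qed

lemma atypical_bound: "n \<ge> N0 \<Longrightarrow> P n (atypical n) \<le> C3 * real n powr (-2-\<epsilon>)"
  unfolding atypical_def using tail by simp

lemma atypical_mass:
  assumes "n \<ge> 1" "n \<ge> N0"
  shows "P n (atypical n) + P (Suc n) (atypical (Suc n)) \<le> 2 * C3 * real n powr (-2-\<epsilon>)"
proof -
  have "real (Suc n) powr (-2-\<epsilon>) \<le> real n powr (-2-\<epsilon>)"
    using assms eps by (intro powr_mono2') auto
  then have "C3 * real (Suc n) powr (-2-\<epsilon>) \<le> C3 * real n powr (-2-\<epsilon>)"
    using const_signs by (intro mult_left_mono) auto
  then show ?thesis using atypical_bound[of n] atypical_bound[of "Suc n"] assms by simp
qed

end

subsection \<open>Bounded harmonic functions have increments of order 1/k\<close>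

locale bounded_harmonic = election_kernel +
  fixes g :: "nat \<Rightarrow> real" and M :: nat
  assumes g_bounded: "\<And>n. \<bar>g n\<bar> \<le> 1"
    and harmonic: "\<And>n. n \<ge> M \<Longrightarrow> g n = (\<Sum>j\<le>n. pmf (Y n) j * g j)"
begin

definition incr :: "nat \<Rightarrow> real" where "incr k = \<bar>g (Suc k) - g k\<bar>"

lemma incr_le2: "incr k \<le> 2"
  unfolding incr_def using g_bounded[of k] g_bounded[of "Suc k"] by linarith

lemma incr_subaverage: assumes "n \<ge> 1" "n \<ge> M"
  shows "incr n \<le> (\<Sum>k<Suc n. incr k * w n k)"
proof -
  have "g (Suc n) = (\<Sum>j\<le>Suc n. pmf (Y (Suc n)) j * g j)" "g n = (\<Sum>j\<le>n. pmf (Y n) j * g j)"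
    by (rule harmonic, use assms in simp)+
  then have "g (Suc n) - g n = (\<Sum>k<Suc n. (g (Suc k) - g k) * w n k)"
    using average_difference[OF assms(1), of g] by linarith
  then have "incr n = \<bar>\<Sum>k<Suc n. (g (Suc k) - g k) * w n k\<bar>" unfolding incr_def by simp
  also have "\<dots> \<le> (\<Sum>k<Suc n. \<bar>(g (Suc k) - g k) * w n k\<bar>)" by (rule sum_abs)
  also have "\<dots> = (\<Sum>k<Suc n. incr k * w n k)"
    using w_nonneg[OF assms(1)] by (intro sum.cong refl) (simp add: incr_def abs_mult)
  finally show ?thesis .
qed

lemma window_sum:
  assumes "n \<ge> 1" "n \<ge> N0" "c \<ge> 0" "\<And>k. k \<in> window n \<Longrightarrow> incr k \<le> c"
  shows "(\<Sum>k\<in>window n. incr k * w n k) \<le> c * (\<alpha> + C1 * D n)"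
proof -
  have wn: "w n k \<ge> 0" for k using w_nonneg assms(1) by simp
  have "(\<Sum>k\<in>window n. incr k * w n k) \<le> (\<Sum>k\<in>window n. c * w n k)"
    using assms(4) wn by (intro sum_mono mult_right_mono) auto
  also have "\<dots> = c * (\<Sum>k\<in>window n. w n k)" by (simp add: sum_distrib_left)
  also have "(\<Sum>k\<in>window n. w n k) \<le> (\<Sum>k<Suc n. w n k)"
    using wn by (intro sum_mono2) (auto simp: window_def)
  also have "\<dots> \<le> \<alpha> + C1 * D n" using sum_w[OF assms(1)] drift[OF assms(2)] by simp
  finally show ?thesis using assms(3) by (simp add: mult_left_mono)
qed

lemma outside_window_sum:
  assumes "n \<ge> 1" "n \<ge> N0"
  shows "(\<Sum>k\<in>{..<Suc n} - window n. incr k * w n k) \<le> 8 * C3 * real n powr (-1-\<epsilon>)"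
proof -
  define \<tau> where "\<tau> = P n (atypical n) + P (Suc n) (atypical (Suc n))"
  have "(\<Sum>k\<in>{..<Suc n} - window n. incr k * w n k) \<le> (\<Sum>k\<in>{..<Suc n} - window n. 2 * \<tau>)"
  proof (intro sum_mono)
    fix k assume "k \<in> {..<Suc n} - window n"
    then have "w n k \<le> \<tau>" unfolding \<tau>_def using w_outside_window assms(1) by simp
    have "incr k * w n k \<le> 2 * w n k"
      using incr_le2 w_nonneg[OF assms(1)] by (intro mult_right_mono) auto
    with \<open>w n k \<le> \<tau>\<close> show "incr k * w n k \<le> 2 * \<tau>" by linarith
  qed
  also have "\<dots> = real (card ({..<Suc n} - window n)) * (2 * \<tau>)" by simp
  also have "\<dots> \<le> real (Suc n) * (2 * \<tau>)"
  proof (intro mult_right_mono)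
    have "card ({..<Suc n} - window n) \<le> card {..<Suc n}" by (intro card_mono) auto
    then show "real (card ({..<Suc n} - window n)) \<le> real (Suc n)" by simp
  qed (simp add: \<tau>_def)
  also have "\<dots> \<le> (2 * real n) * (2 * (2 * C3 * real n powr (-2-\<epsilon>)))"
    using atypical_mass[OF assms] assms(1) by (intro mult_mono) (auto simp: \<tau>_def)
  also have "\<dots> = 8 * C3 * (real n * real n powr (-2-\<epsilon>))" by simp
  finally show ?thesis by (simp add: powr_mult_base)
qed

lemma growth_step:
  fixes B K \<beta> \<gamma> :: real and n :: nat
  assumes n: "n \<ge> 1" "n \<ge> M" "n \<ge> N0"
    and Dn: "D n \<le> \<gamma>" and DSn: "D (Suc n) \<le> \<gamma>" and g4: "\<gamma> \<le> \<alpha> / 4"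
    and win: "(\<alpha> + \<gamma>) * (real n + 1) \<le> \<beta> * real n" and b1: "\<beta> < 1"
    and low: "3 \<le> (\<alpha> - \<gamma>) * real n"
    and IH: "\<And>k. 3 \<le> k \<Longrightarrow> k < n \<Longrightarrow> incr k * real k \<le> B * log_weight K \<epsilon> (real k)"
    and K: "K \<ge> 0" and B: "B \<ge> 0"
  shows "incr n * real n
    \<le> B * log_weight K \<epsilon> (\<beta> * real n) * (\<alpha> + C1 * D n) / (\<alpha> - D n) + 8 * C3 * real n powr (-\<epsilon>)"
proof -
  define c where "c = B * log_weight K \<epsilon> (\<beta> * real n) / ((\<alpha> - D n) * real n)"
  have npos: "real n > 0" using n by simp
  have aDpos: "(\<alpha> - D n) * real n > 0" using Dn g4 alpha npos by simp
  have Wpos: "log_weight K \<epsilon> (\<beta> * real n) > 0" by (rule log_weight_pos)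
  have c0: "c \<ge> 0" unfolding c_def using B Wpos aDpos by simp
  have incr_window: "incr k \<le> c" if k: "k \<in> window n" for k
  proof -
    have k1: "(\<alpha> - D n) * real n \<le> real k" using k unfolding window_def by auto
    have "(\<alpha> - \<gamma>) * real n \<le> (\<alpha> - D n) * real n" using Dn npos by (intro mult_right_mono) auto
    then have k3: "3 \<le> real k" using k1 low by linarith
    have "real k < (\<alpha> + D (Suc n)) * real (Suc n)" using k unfolding window_def by auto
    also have "\<dots> \<le> (\<alpha> + \<gamma>) * (real n + 1)" using DSn by (intro mult_mono) (use alpha D_nonneg[of "Suc n"] in auto)
    also have "\<dots> \<le> \<beta> * real n" by (rule win)
    finally have kb: "real k < \<beta> * real n" .
    moreover have "\<beta> * real n < real n" using b1 npos by simp
    ultimately have "k < n" by linarith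
    then have "incr k * real k \<le> B * log_weight K \<epsilon> (real k)" using IH k3 by simp
    also have "\<dots> \<le> B * log_weight K \<epsilon> (\<beta> * real n)"
      using B K eps k3 kb by (intro mult_left_mono log_weight_mono) auto
    finally have "incr k * real k \<le> B * log_weight K \<epsilon> (\<beta> * real n)" .
    then have "incr k \<le> B * log_weight K \<epsilon> (\<beta> * real n) / real k"
      using k3 by (simp add: pos_le_divide_eq)
    also have "\<dots> \<le> B * log_weight K \<epsilon> (\<beta> * real n) / ((\<alpha> - D n) * real n)"
      using k1 aDpos B Wpos by (intro divide_left_mono) auto
    finally show ?thesis unfolding c_def .
  qed
  have "incr n \<le> (\<Sum>k<Suc n. incr k * w n k)" using incr_subaverage n by simp
  also have "\<dots> = (\<Sum>k\<in>{..<Suc n} - window n. incr k * w n k) + (\<Sum>k\<in>window n. incr k * w n k)"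
    by (intro sum.subset_diff) (auto simp: window_def)
  finally have "incr n \<le> c * (\<alpha> + C1 * D n) + 8 * C3 * real n powr (-1-\<epsilon>)"
    using window_sum[OF n(1,3) c0 incr_window] outside_window_sum[OF n(1,3)] by linarith
  then have "incr n * real n \<le> (c * (\<alpha> + C1 * D n) + 8 * C3 * real n powr (-1-\<epsilon>)) * real n"
    using npos by (intro mult_right_mono) auto
  also have "\<dots> = c * real n * (\<alpha> + C1 * D n) + 8 * C3 * (real n * real n powr (-1-\<epsilon>))"
    by (simp add: algebra_simps)
  also have "real n * real n powr (-1-\<epsilon>) = real n powr (-\<epsilon>)"
    by (simp add: powr_mult_base)
  also have "c * real n = B * log_weight K \<epsilon> (\<beta> * real n) / (\<alpha> - D n)"
    unfolding c_def using npos by simp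
  finally show ?thesis by simp
qed

definition large_enough :: "real \<Rightarrow> nat \<Rightarrow> bool" where
  "large_enough \<gamma> n \<longleftrightarrow> (\<alpha> + \<gamma>) * (real n + 1) \<le> (\<alpha> + 2 * \<gamma>) * real n \<and>
    C2 * ln (real n) powr (-1-\<epsilon>) \<le> \<gamma> \<and> 3 \<le> (\<alpha> - \<gamma>) * real n \<and>
    real n powr (-\<epsilon>) \<le> ln (real n) powr (-1-\<epsilon>) \<and> n \<ge> N0 \<and> n \<ge> M \<and> n \<ge> 1"

lemma eventually_large_enough:
  assumes "\<gamma> > 0" "\<gamma> \<le> \<alpha> / 4"
  shows "eventually (large_enough \<gamma>) at_top"
proof -
  have "\<alpha> - \<gamma> > 0" using assms alpha by simp
  then have "eventually (\<lambda>n::nat. 3 \<le> (\<alpha> - \<gamma>) * real n) at_top" by real_asymp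
  moreover have "eventually (\<lambda>n::nat. (\<alpha> + \<gamma>) * (real n + 1) \<le> (\<alpha> + 2 * \<gamma>) * real n) at_top"
    using assms alpha by real_asymp
  moreover have "eventually (\<lambda>n::nat. C2 * ln (real n) powr (-1-\<epsilon>) \<le> \<gamma>) at_top"
    using assms eps const_signs by real_asymp
  moreover have "eventually (\<lambda>n::nat. real n powr (-\<epsilon>) \<le> ln (real n) powr (-1-\<epsilon>)) at_top"
    using eps by real_asymp
  moreover have "eventually (\<lambda>n::nat. n \<ge> N0 \<and> n \<ge> M \<and> n \<ge> 1) at_top"
    by (intro eventually_conj eventually_ge_at_top)
  ultimately show ?thesis unfolding large_enough_def by eventually_elim blast
qed

(* The induction step for large n: the loss (\<alpha> + C1 D)/(\<alpha> - D) \<le> 1 + A L of growth_step,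
   with L = (ln n)^(-1-\<epsilon>), and the tail term are absorbed by the growth
   W(n) \<ge> W(\<beta> n)(1 + 2 A L) of the weight W = log_weight K \<epsilon>, thanks to the choice of K. *)
lemma incr_step_large:
  fixes B K \<gamma> :: real and n :: nat
  defines "\<beta> \<equiv> \<alpha> + 2 * \<gamma>" and "A \<equiv> 2 * (C1 + 1) * C2 / \<alpha>" and "W \<equiv> log_weight K \<epsilon>"
  assumes \<gamma>: "0 < \<gamma>" "\<gamma> \<le> \<alpha> / 4" "\<beta> < 1"
    and large: "large_enough \<gamma> n" "large_enough \<gamma> (Suc n)"
    and K: "K \<ge> 0" "K * \<epsilon> * (- ln \<beta>) = 2 * A"
    and B: "B > 0" "B * W 3 * A \<ge> 8 * C3"
    and IH: "\<And>k. 3 \<le> k \<Longrightarrow> k < n \<Longrightarrow> incr k * real k \<le> B * W (real k)"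
  shows "incr n * real n \<le> B * W (real n)"
proof -
  define L where "L = ln (real n) powr (-1-\<epsilon>)"
  have n: "(\<alpha> + \<gamma>) * (real n + 1) \<le> \<beta> * real n" "3 \<le> (\<alpha> - \<gamma>) * real n"
      "real n powr (-\<epsilon>) \<le> L" "n \<ge> N0" "n \<ge> M" "n \<ge> 1"
    using large(1) unfolding large_enough_def \<beta>_def L_def by auto
  have Dn: "D n \<le> C2 * L" "D n \<le> \<gamma>" and DSn: "D (Suc n) \<le> \<gamma>"
    using D_small[of n] D_small[of "Suc n"] large unfolding large_enough_def L_def by force+
  have "(\<alpha> - \<gamma>) * real n \<le> \<beta> * real n"
    using \<gamma> unfolding \<beta>_def by (intro mult_right_mono) auto
  then have bn3: "3 \<le> \<beta> * real n" using n by linarith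
  have \<beta>: "0 < \<beta>" using \<gamma> alpha unfolding \<beta>_def by simp
  have step: "incr n * real n \<le> B * W (\<beta> * real n) * (\<alpha> + C1 * D n) / (\<alpha> - D n) + 8 * C3 * real n powr (-\<epsilon>)"
    unfolding W_def
    by (rule growth_step[OF n(6,5,4) Dn(2) DSn \<gamma>(2) n(1) \<gamma>(3) n(2) IH[unfolded W_def] K(1) less_imp_le[OF B(1)]])
  have ratio: "(\<alpha> + C1 * D n) / (\<alpha> - D n) \<le> 1 + A * L"
    unfolding A_def using drift_ratio[OF alpha(1) const_signs(1) D_nonneg Dn(1)] Dn(2) \<gamma>(2) by simp
  have growth: "W (real n) \<ge> W (\<beta> * real n) * (1 + 2 * A * L)"
    using log_weight_ratio[OF K(1) eps \<beta> \<gamma>(3), of "real n"] bn3 unfolding W_def L_def K(2) by simp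
  have "W (\<beta> * real n) \<ge> W 3"
    unfolding W_def using K eps bn3 by (intro log_weight_mono) auto
  have tail: "8 * C3 * real n powr (-\<epsilon>) \<le> B * W (\<beta> * real n) * A * L"
  proof -
    have "8 * C3 * real n powr (-\<epsilon>) \<le> 8 * C3 * L" using n(3) const_signs by (intro mult_left_mono) auto
    also have "\<dots> \<le> B * W 3 * A * L" using B(2) by (intro mult_right_mono) (auto simp: L_def)
    also have "\<dots> \<le> B * W (\<beta> * real n) * A * L"
      using \<open>W (\<beta> * real n) \<ge> W 3\<close> B const_signs alpha
      by (intro mult_right_mono mult_left_mono) (auto simp: L_def A_def)
    finally show ?thesis .
  qed
  have "B * W (\<beta> * real n) \<ge> 0" using B log_weight_pos[of K \<epsilon> "\<beta> * real n"] by (simp add: W_def)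
  then have "B * W (\<beta> * real n) * (\<alpha> + C1 * D n) / (\<alpha> - D n) \<le> B * W (\<beta> * real n) * (1 + A * L)"
    using mult_left_mono[OF ratio] by simp
  with step tail have "incr n * real n \<le> B * W (\<beta> * real n) * (1 + 2 * A * L)"
    by (simp add: algebra_simps)
  also have "\<dots> \<le> B * W (real n)"
    using mult_left_mono[OF growth less_imp_le[OF B(1)]] by (simp add: mult_ac)
  finally show ?thesis .
qed

(* The increments are O(1/k): by strong induction k incr k \<le> B log_weight K \<epsilon> k, which is
   trivial below a threshold N2 (for B large) and propagated by incr_step_large above it. *)
lemma incr_bound: "\<exists>B>0. \<forall>k\<ge>1. incr k * real k \<le> B"
proof -
  define \<gamma> where "\<gamma> = min \<alpha> (1 - \<alpha>) / 4"
  have \<gamma>: "\<gamma> > 0" "\<gamma> \<le> \<alpha> / 4" "\<alpha> + 2 * \<gamma> < 1" unfolding \<gamma>_def using alpha by (auto simp: min_def field_simps)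
  define A where "A = 2 * (C1 + 1) * C2 / \<alpha>"
  have Apos: "A > 0" unfolding A_def using const_signs alpha by simp
  define K where "K = 2 * A / (\<epsilon> * (- ln (\<alpha> + 2 * \<gamma>)))"
  have "ln (\<alpha> + 2 * \<gamma>) < 0" using \<gamma> alpha by simp
  then have K: "K \<ge> 0" "K * \<epsilon> * (- ln (\<alpha> + 2 * \<gamma>)) = 2 * A"
    unfolding K_def using Apos eps by (simp_all add: divide_nonneg_neg mult_pos_neg)
  define W where "W = log_weight K \<epsilon>"
  have W3: "W 3 > 0" unfolding W_def by (rule log_weight_pos)
  obtain N2 where N2: "\<And>n. n \<ge> N2 \<Longrightarrow> large_enough \<gamma> n"
    using eventually_large_enough[OF \<gamma>(1,2)] unfolding eventually_at_top_linorder by blast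
  define B where "B = max (2 * real N2 / W 3) (8 * C3 / (W 3 * A)) + 1"
  have B_ge: "2 * real N2 / W 3 \<le> B" "8 * C3 / (W 3 * A) \<le> B" "0 \<le> 2 * real N2 / W 3"
    unfolding B_def using W3 by auto
  then have B: "B * W 3 \<ge> 2 * real N2" "B * W 3 * A \<ge> 8 * C3"
    using W3 Apos by (simp_all add: pos_divide_le_eq mult_ac)
  have "B > 0" using B_ge(3) unfolding B_def by linarith
  note B = B this
  have claim: "incr n * real n \<le> B * W (real (max n 3))" if "n \<ge> 1" for n
    using that
  proof (induction n rule: less_induct)
    case (less n)
    show ?case
    proof (cases "n < N2")
      case True
      have "incr n * real n \<le> 2 * real n" using incr_le2 by (intro mult_right_mono) auto
      also have "\<dots> \<le> B * W 3" using True B(1) by simp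
      also have "\<dots> \<le> B * W (real (max n 3))"
        unfolding W_def using B(3) K eps by (intro mult_left_mono log_weight_mono) auto
      finally show ?thesis .
    next
      case False
      have IH: "incr k * real k \<le> B * W (real k)" if "3 \<le> k" "k < n" for k
        using less.IH[of k] that by (simp add: max_def)
      have large: "large_enough \<gamma> n" "large_enough \<gamma> (Suc n)" using N2 False by simp_all
      have "incr n * real n \<le> B * W (real n)"
        using incr_step_large[OF \<gamma> large K(1) K(2)[unfolded A_def] B(3)] B(2) IH
        unfolding W_def A_def by blast
      moreover have "(\<alpha> - \<gamma>) * real n \<le> 1 * real n" using alpha \<gamma> by (intro mult_right_mono) auto
      then have "real n \<ge> 3" using large(1) unfolding large_enough_def by linarith
      ultimately show ?thesis by (simp add: max_def)
    qed
  qed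
  show ?thesis
  proof (intro exI[of _ B] conjI allI impI B(3))
    fix k :: nat assume "k \<ge> 1"
    then have "incr k * real k \<le> B * W (real (max k 3))" by (rule claim)
    also have "\<dots> \<le> B" using B(3) log_weight_le1[OF K(1)] unfolding W_def by (simp add: mult_left_le)
    finally show "incr k * real k \<le> B" .
  qed
qed

subsection \<open>Comparison of g(n) with g(\<alpha> n)\<close>

definition incr_const :: real where
  "incr_const = (SOME B. B > 0 \<and> (\<forall>k\<ge>1. incr k * real k \<le> B))"

lemma incr_const: "incr_const > 0" "\<And>k. k \<ge> 1 \<Longrightarrow> incr k * real k \<le> incr_const"
  using someI_ex[OF incr_bound] unfolding incr_const_def by auto

lemma g_lipschitz_above: assumes "1 \<le> m" "m \<le> n"
  shows "\<bar>g n - g m\<bar> \<le> incr_const * (real n - real m) / real m"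
  using assms(2)
proof (induction n rule: dec_induct)
  case base then show ?case by simp
next
  case (step n)
  have "\<bar>g (Suc n) - g m\<bar> \<le> \<bar>g n - g m\<bar> + incr n" unfolding incr_def by linarith
  also have "incr n \<le> incr_const / real n"
    using incr_const(2)[of n] step assms by (simp add: pos_le_divide_eq)
  also have "incr_const / real n \<le> incr_const / real m"
    using step assms incr_const(1) by (intro divide_left_mono) auto
  finally have "\<bar>g (Suc n) - g m\<bar> \<le> incr_const * (real n - real m) / real m + incr_const / real m"
    using step by linarith
  also have "\<dots> = incr_const * (real (Suc n) - real m) / real m"
    by (simp add: add_divide_distrib[symmetric] algebra_simps)
  finally show ?case .
qed

lemma g_lipschitz: assumes "1 \<le> m" "1 \<le> n"
  shows "\<bar>g n - g m\<bar> \<le> incr_const * \<bar>real n - real m\<bar> / min (real n) (real m)"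
proof (cases "m \<le> n")
  case True then show ?thesis using g_lipschitz_above[OF assms(1) True] by (simp add: min_def)
next
  case False
  then have "\<bar>g m - g n\<bar> \<le> incr_const * (real m - real n) / real n"
    using g_lipschitz_above[OF assms(2)] by simp
  then show ?thesis using False by (simp add: min_def abs_minus_commute)
qed

lemma harmonic_deviation:
  assumes n: "n \<ge> 1" "n \<ge> M" and c: "c \<ge> 0"
    and typical: "\<And>j. j \<le> n \<Longrightarrow> j \<notin> atypical n \<Longrightarrow> \<bar>g j - g r\<bar> \<le> c"
  shows "\<bar>g n - g r\<bar> \<le> c + 2 * P n (atypical n)"
proof -
  have pt: "pmf (Y n) j * \<bar>g j - g r\<bar> \<le> pmf (Y n) j * c + 2 * (if j \<in> atypical n then pmf (Y n) j else 0)"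
    if "j \<le> n" for j
  proof (cases "j \<in> atypical n")
    case True
    have "pmf (Y n) j * \<bar>g j - g r\<bar> \<le> pmf (Y n) j * 2"
      using g_bounded[of j] g_bounded[of r] by (intro mult_left_mono) auto
    moreover have "0 \<le> c * pmf (Y n) j" using c by simp
    ultimately show ?thesis using True by (simp add: algebra_simps)
  next
    case False
    then show ?thesis using typical[OF that] by (simp add: mult_left_mono)
  qed
  have gr: "g r = (\<Sum>j\<le>n. pmf (Y n) j * g r)"
    using sum_pmf_one[OF n(1) order.refl] by (simp add: sum_distrib_right[symmetric])
  have "g n - g r = (\<Sum>j\<le>n. pmf (Y n) j * (g j - g r))"
    using harmonic[OF n(2)] gr by (simp add: right_diff_distrib sum_subtractf)
  then have "\<bar>g n - g r\<bar> \<le> (\<Sum>j\<le>n. pmf (Y n) j * \<bar>g j - g r\<bar>)"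
    by (simp add: sum_abs[THEN order_trans] abs_mult)
  also have "\<dots> \<le> (\<Sum>j\<le>n. pmf (Y n) j * c + 2 * (if j \<in> atypical n then pmf (Y n) j else 0))"
    by (intro sum_mono pt) simp
  also have "\<dots> = c * (\<Sum>j\<le>n. pmf (Y n) j) + 2 * (\<Sum>j\<in>{..n} \<inter> atypical n. pmf (Y n) j)"
    by (simp add: sum.distrib sum_distrib_left sum_distrib_right[symmetric] sum.inter_restrict mult_ac)
  also have "(\<Sum>j\<le>n. pmf (Y n) j) = 1" using sum_pmf_one n by simp
  also have "(\<Sum>j\<in>{..n} \<inter> atypical n. pmf (Y n) j) = P n ({..n} \<inter> atypical n)"
    using P_finite_sum[of n "{..n} \<inter> atypical n" n] n by simp
  also have "P n ({..n} \<inter> atypical n) \<le> P n (atypical n)"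
    by (intro measure_pmf.finite_measure_mono) auto
  finally show ?thesis by simp
qed

(* Y n is concentrated within D(n) n of \<alpha> n, where g has increments O(1/n); hence g(n) and
   g(\<lfloor>\<alpha> n\<rfloor>) differ by O(D(n) + 1/n) plus the atypical probability. *)
lemma g_scale_deviation:
  assumes n: "n \<ge> 1" "n \<ge> M" "n \<ge> N0" and an: "2 \<le> \<alpha> * real n" and Dn: "D n \<le> \<alpha> / 4"
  shows "\<bar>g n - g (nat \<lfloor>\<alpha> * real n\<rfloor>)\<bar>
    \<le> 2 * incr_const / \<alpha> * (D n + 1 / real n) + 2 * C3 * real n powr (-2-\<epsilon>)"
proof -
  define r where "r = nat \<lfloor>\<alpha> * real n\<rfloor>"
  have npos: "real n > 0" using n by simp
  have r: "real r \<le> \<alpha> * real n" "real r > \<alpha> * real n - 1"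
    unfolding r_def using an by linarith+
  define c where "c = 2 * incr_const * (D n * real n + 1) / (\<alpha> * real n)"
  have c0: "c \<ge> 0" unfolding c_def using incr_const(1) D_nonneg[of n] alpha npos by simp
  have typical: "\<bar>g j - g r\<bar> \<le> c" if "j \<notin> atypical n" for j
  proof -
    have jd: "\<bar>real j - \<alpha> * real n\<bar> \<le> D n * real n" using that unfolding atypical_def by simp
    have "D n * real n \<le> \<alpha> / 4 * real n" using Dn npos by (intro mult_right_mono) auto
    then have mn: "min (real j) (real r) \<ge> \<alpha> * real n / 2" using jd r an by auto
    have "\<bar>g j - g r\<bar> \<le> incr_const * \<bar>real j - real r\<bar> / min (real j) (real r)"
      by (rule g_lipschitz) (use mn an in auto)
    also have "\<dots> \<le> incr_const * (D n * real n + 1) / min (real j) (real r)"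
      using jd r incr_const(1) mn an by (intro divide_right_mono mult_left_mono) auto
    also have "\<dots> \<le> incr_const * (D n * real n + 1) / (\<alpha> * real n / 2)"
      using mn an incr_const(1) D_nonneg[of n] npos by (intro divide_left_mono) auto
    finally show ?thesis unfolding c_def by (simp add: ac_simps)
  qed
  have "\<bar>g n - g r\<bar> \<le> c + 2 * P n (atypical n)"
    using harmonic_deviation[of n c r] typical n c0 by simp
  moreover have "c = 2 * incr_const / \<alpha> * (D n + 1 / real n)"
    unfolding c_def using npos alpha by (simp add: field_simps)
  ultimately show ?thesis unfolding r_def using atypical_bound[OF n(3)] by simp
qed

lemma g_scale: "\<exists>C>0. \<exists>N. \<forall>n\<ge>N. \<bar>g n - g (nat \<lfloor>\<alpha> * real n\<rfloor>)\<bar> \<le> C * ln (real n) powr (-1-\<epsilon>)"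
proof -
  have "\<alpha> / 4 > 0" using alpha by simp
  then have "eventually (\<lambda>n::nat. C2 * ln (real n) powr (-1-\<epsilon>) \<le> \<alpha> / 4) at_top"
    using eps const_signs by real_asymp
  moreover have "eventually (\<lambda>n::nat. 2 \<le> \<alpha> * real n) at_top" using alpha by real_asymp
  moreover have "eventually (\<lambda>n::nat. 1 / real n \<le> ln (real n) powr (-1-\<epsilon>)) at_top"
    using eps by real_asymp
  moreover have "eventually (\<lambda>n::nat. real n powr (-2-\<epsilon>) \<le> ln (real n) powr (-1-\<epsilon>)) at_top"
    using eps by real_asymp
  moreover have "eventually (\<lambda>n::nat. n \<ge> N0 \<and> n \<ge> M \<and> n \<ge> 1) at_top"
    by (intro eventually_conj eventually_ge_at_top)
  ultimately have "eventually (\<lambda>n::nat. C2 * ln (real n) powr (-1-\<epsilon>) \<le> \<alpha> / 4 \<and> 2 \<le> \<alpha> * real n \<and>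
      1 / real n \<le> ln (real n) powr (-1-\<epsilon>) \<and> real n powr (-2-\<epsilon>) \<le> ln (real n) powr (-1-\<epsilon>) \<and>
      n \<ge> N0 \<and> n \<ge> M \<and> n \<ge> 1) at_top"
    by eventually_elim blast
  then obtain N where N: "\<And>n. n \<ge> N \<Longrightarrow> C2 * ln (real n) powr (-1-\<epsilon>) \<le> \<alpha> / 4 \<and> 2 \<le> \<alpha> * real n \<and>
      1 / real n \<le> ln (real n) powr (-1-\<epsilon>) \<and> real n powr (-2-\<epsilon>) \<le> ln (real n) powr (-1-\<epsilon>) \<and>
      n \<ge> N0 \<and> n \<ge> M \<and> n \<ge> 1"
    unfolding eventually_at_top_linorder by blast
  define C where "C = 2 * incr_const / \<alpha> * (C2 + 1) + 2 * C3"
  have C: "C > 0" unfolding C_def using incr_const(1) const_signs alpha by (simp add: add_pos_nonneg)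
  show ?thesis
  proof (intro exI[of _ C] exI[of _ N] conjI allI impI C)
    fix n assume "n \<ge> N"
    note Nn = N[OF this]
    define L where "L = ln (real n) powr (-1-\<epsilon>)"
    have Dn: "D n \<le> C2 * L" "D n \<le> \<alpha> / 4" using D_small Nn unfolding L_def by force+
    have "2 * incr_const / \<alpha> * (D n + 1 / real n) \<le> 2 * incr_const / \<alpha> * (C2 * L + L)"
      using Dn Nn incr_const(1) alpha unfolding L_def by (intro mult_left_mono add_mono) auto
    moreover have "2 * C3 * real n powr (-2-\<epsilon>) \<le> 2 * C3 * L"
      unfolding L_def using Nn const_signs by (intro mult_left_mono) auto
    moreover have "2 * incr_const / \<alpha> * (C2 * L + L) + 2 * C3 * L = C * L"
      unfolding C_def by (simp add: algebra_simps)
    ultimately show "\<bar>g n - g (nat \<lfloor>\<alpha> * real n\<rfloor>)\<bar> \<le> C * ln (real n) powr (-1-\<epsilon>)"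
      using g_scale_deviation[of n] Nn Dn unfolding L_def by fastforce
  qed
qed

lemma g_floor_shift:
  assumes y0: "y \<ge> 0" and Nm: "4 \<le> \<alpha> * real (nat \<lfloor>y\<rfloor>)"
  shows "\<bar>g (nat \<lfloor>\<alpha> * y\<rfloor>) - g (nat \<lfloor>\<alpha> * real (nat \<lfloor>y\<rfloor>)\<rfloor>)\<bar> \<le> 2 * incr_const / (\<alpha> * real (nat \<lfloor>y\<rfloor>))"
proof -
  define m where "m = nat \<lfloor>y\<rfloor>"
  have my: "real m \<le> y" "y < real m + 1" unfolding m_def using y0 by linarith+
  have m4: "4 \<le> \<alpha> * real m" using Nm unfolding m_def .
  define r1 where "r1 = nat \<lfloor>\<alpha> * real m\<rfloor>"
  define r2 where "r2 = nat \<lfloor>\<alpha> * y\<rfloor>"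
  have am1: "\<alpha> * real m \<le> \<alpha> * y" using my alpha by (intro mult_left_mono) auto
  have "\<alpha> * y < \<alpha> * (real m + 1)" using my alpha by (intro mult_strict_left_mono) auto
  then have "\<alpha> * y < \<alpha> * real m + 1" using alpha by (simp add: algebra_simps)
  note am = am1 this
  have r1b: "real r1 \<le> \<alpha> * real m" "real r1 > \<alpha> * real m - 1" unfolding r1_def using m4 by linarith+
  have r2b: "real r2 \<le> \<alpha> * y" "real r2 > \<alpha> * y - 1" unfolding r2_def using m4 am by linarith+
  have "r1 \<le> r2" unfolding r1_def r2_def using am by (intro nat_mono floor_mono) auto
  moreover have "real r2 < real (r1 + 2)" using r1b r2b am by simp
  then have "r2 < r1 + 2" by (simp only: of_nat_less_iff)
  ultimately have d12: "\<bar>real r2 - real r1\<bar> \<le> 1" by simp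
  have r_large: "real r1 \<ge> \<alpha> * real m / 2" "real r2 \<ge> \<alpha> * real m / 2"
    using r1b r2b m4 am by linarith+
  have "\<bar>g r2 - g r1\<bar> \<le> incr_const * \<bar>real r2 - real r1\<bar> / min (real r2) (real r1)"
    by (rule g_lipschitz) (use r_large m4 in \<open>linarith+\<close>)
  also have "\<dots> \<le> incr_const * 1 / min (real r2) (real r1)"
    using d12 incr_const(1) r_large m4 by (intro divide_right_mono mult_left_mono) auto
  also have "\<dots> \<le> incr_const * 1 / (\<alpha> * real m / 2)"
    using r_large incr_const(1) m4 by (intro divide_left_mono) auto
  finally show ?thesis unfolding r1_def r2_def m_def by (simp add: ac_simps)
qed

lemma g_scale_real: "\<exists>C>0. \<exists>N. \<forall>y\<ge>0. nat \<lfloor>y\<rfloor> \<ge> N \<longrightarrow>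
    \<bar>g (nat \<lfloor>y\<rfloor>) - g (nat \<lfloor>\<alpha> * y\<rfloor>)\<bar> \<le> C * ln (real (nat \<lfloor>y\<rfloor>)) powr (-1-\<epsilon>)"
proof -
  obtain C N where C: "C > 0"
    and N: "\<And>n. n \<ge> N \<Longrightarrow> \<bar>g n - g (nat \<lfloor>\<alpha> * real n\<rfloor>)\<bar> \<le> C * ln (real n) powr (-1-\<epsilon>)"
    using g_scale by blast
  have "eventually (\<lambda>n::nat. 4 \<le> \<alpha> * real n) at_top" using alpha by real_asymp
  moreover have "eventually (\<lambda>n::nat. 1 / real n \<le> ln (real n) powr (-1-\<epsilon>)) at_top"
    using eps by real_asymp
  ultimately have "eventually (\<lambda>n::nat. 4 \<le> \<alpha> * real n \<and> 1 / real n \<le> ln (real n) powr (-1-\<epsilon>)) at_top"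
    by (rule eventually_conj)
  then obtain N' where N': "\<And>n. n \<ge> N' \<Longrightarrow> 4 \<le> \<alpha> * real n \<and> 1 / real n \<le> ln (real n) powr (-1-\<epsilon>)"
    unfolding eventually_at_top_linorder by blast
  define C' where "C' = C + 2 * incr_const / \<alpha>"
  have C'pos: "C' > 0" unfolding C'_def using C incr_const(1) alpha by (simp add: add_pos_nonneg)
  show ?thesis
  proof (intro exI[of _ C'] exI[of _ "max N N'"] conjI allI impI C'pos)
    fix y :: real assume y0: "y \<ge> 0" and mN: "nat \<lfloor>y\<rfloor> \<ge> max N N'"
    define m where "m = nat \<lfloor>y\<rfloor>"
    have Nm: "4 \<le> \<alpha> * real m" "1 / real m \<le> ln (real m) powr (-1-\<epsilon>)" using N'[of m] mN m_def by auto
    have "2 * incr_const / (\<alpha> * real m) = 2 * incr_const / \<alpha> * (1 / real m)" by simp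
    also have "\<dots> \<le> 2 * incr_const / \<alpha> * ln (real m) powr (-1-\<epsilon>)"
      using Nm incr_const(1) alpha by (intro mult_left_mono) auto
    finally have "\<bar>g (nat \<lfloor>\<alpha> * y\<rfloor>) - g (nat \<lfloor>\<alpha> * real m\<rfloor>)\<bar> \<le> 2 * incr_const / \<alpha> * ln (real m) powr (-1-\<epsilon>)"
      using g_floor_shift[OF y0] Nm unfolding m_def by fastforce
    moreover have "\<bar>g m - g (nat \<lfloor>\<alpha> * real m\<rfloor>)\<bar> \<le> C * ln (real m) powr (-1-\<epsilon>)"
      using N[of m] mN m_def by simp
    ultimately have "\<bar>g m - g (nat \<lfloor>\<alpha> * y\<rfloor>)\<bar> \<le> C' * ln (real m) powr (-1-\<epsilon>)"
      unfolding C'_def distrib_right by linarith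
    then show "\<bar>g (nat \<lfloor>y\<rfloor>) - g (nat \<lfloor>\<alpha> * y\<rfloor>)\<bar> \<le> C' * ln (real (nat \<lfloor>y\<rfloor>)) powr (-1-\<epsilon>)"
      unfolding m_def .
  qed
qed

subsection \<open>The limit function \<psi>\<close>

definition orbit :: "real \<Rightarrow> nat \<Rightarrow> nat" where "orbit t k = nat \<lfloor>t / \<alpha> ^ k\<rfloor>"

lemma orbit_shift: "orbit (t / \<alpha> ^ K) k = orbit t (k + K)"
  unfolding orbit_def using alpha by (simp add: power_add field_simps)

(* For large t the values g along the orbit converge, and the limit is within
   O((ln t)^(-\<epsilon>/2)) of g(\<lfloor>t\<rfloor>): the k-th step is O((ln t + k ln(1/\<alpha>))^(-1-\<epsilon>)). *)
lemma orbit_convergent_large: "\<exists>T0 C. T0 > 0 \<and> C \<ge> 0 \<and> (\<forall>t\<ge>T0. convergent (\<lambda>k. g (orbit t k)) \<and>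
    \<bar>lim (\<lambda>k. g (orbit t k)) - g (orbit t 0)\<bar> \<le> C * ln (t / 2) powr (-\<epsilon>/2))"
proof -
  obtain C N where C: "C > 0" and N: "\<And>y. y \<ge> 0 \<Longrightarrow> nat \<lfloor>y\<rfloor> \<ge> N \<Longrightarrow>
      \<bar>g (nat \<lfloor>y\<rfloor>) - g (nat \<lfloor>\<alpha> * y\<rfloor>)\<bar> \<le> C * ln (real (nat \<lfloor>y\<rfloor>)) powr (-1-\<epsilon>)"
    using g_scale_real by blast
  define b where "b = - ln \<alpha>"
  have b0: "b > 0" unfolding b_def using alpha by simp
  define h where "h k = (1 + real (Suc k) * b) powr (-1-\<epsilon>/2)" for k
  have sh: "summable h" unfolding h_def using b0 eps by (intro summable_shifted_powr) auto
  define H where "H = suminf h"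
  have H0: "H \<ge> 0" unfolding H_def by (intro suminf_nonneg[OF sh]) (simp add: h_def)
  define T0 where "T0 = max (2 * exp 1) (2 * real N + 2)"
  have main: "convergent (\<lambda>k. g (orbit t k)) \<and>
    \<bar>lim (\<lambda>k. g (orbit t k)) - g (orbit t 0)\<bar> \<le> C * H * ln (t / 2) powr (-\<epsilon>/2)" if "t \<ge> T0" for t
  proof -
    define s where "s = ln (t / 2)"
    have t2: "t / 2 \<ge> exp 1" and tN: "t \<ge> 2 * real N + 2" using that unfolding T0_def by auto
    then have tpos: "t / 2 > 0" using exp_gt_zero[of 1] by linarith
    have s1: "s \<ge> 1" unfolding s_def using t2 ln_ge_iff[OF tpos, of 1] by simp
    have step: "\<bar>g (orbit t (Suc k)) - g (orbit t k)\<bar> \<le> C * s powr (-\<epsilon>/2) * h k" for k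
    proof -
      define y where "y = t / \<alpha> ^ Suc k"
      have ak: "\<alpha> ^ Suc k > 0" "\<alpha> ^ Suc k \<le> 1"
        using alpha by (simp, intro power_le_one) auto
      have yt: "y \<ge> t" unfolding y_def using ak tN by (simp add: le_divide_eq mult_left_le)
      define m where "m = nat \<lfloor>y\<rfloor>"
      have my: "real m > y - 1" "real m \<le> y" unfolding m_def using yt tN by linarith+
      have "orbit t (Suc k) = m" "orbit t k = nat \<lfloor>\<alpha> * y\<rfloor>"
        unfolding m_def y_def orbit_def using alpha by (simp_all add: field_simps)
      then have A: "\<bar>g (orbit t (Suc k)) - g (orbit t k)\<bar> \<le> C * ln (real m) powr (-1-\<epsilon>)"
        using N[of y] my yt tN unfolding m_def by simp
      have "y / 2 = (t / 2) / \<alpha> ^ Suc k" unfolding y_def by simp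
      then have "ln (y / 2) = ln ((t / 2) / \<alpha> ^ Suc k)" by (rule arg_cong)
      also have "\<dots> = ln (t / 2) - ln (\<alpha> ^ Suc k)" by (rule ln_divide_pos) (use ak tpos in auto)
      also have "ln (\<alpha> ^ Suc k) = real (Suc k) * ln \<alpha>" using alpha by (subst ln_realpow) auto
      finally have "ln (y / 2) = s + real (Suc k) * b" unfolding s_def b_def by simp
      moreover have "ln (y / 2) \<le> ln (real m)" using my yt tN by (subst ln_le_cancel_iff) auto
      ultimately have "ln (real m) powr (-1-\<epsilon>) \<le> s powr (-\<epsilon>/2) * h k"
        unfolding h_def using powr_split_bound[OF s1 b0 eps] by simp
      then have "C * ln (real m) powr (-1-\<epsilon>) \<le> C * (s powr (-\<epsilon>/2) * h k)"
        using C by (intro mult_left_mono) auto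
      then show ?thesis using A by (simp add: mult_ac)
    qed
    have "summable (\<lambda>k. C * s powr (-\<epsilon>/2) * h k)" by (intro summable_mult sh)
    note conv = convergent_summable_increments[of "\<lambda>k. g (orbit t k)", OF step this]
    have "(\<Sum>k. C * s powr (-\<epsilon>/2) * h k) = C * s powr (-\<epsilon>/2) * H" unfolding H_def by (rule suminf_mult[OF sh])
    then show ?thesis using conv unfolding s_def by (simp add: mult_ac)
  qed
  show ?thesis
    using main H0 C by (intro exI[of _ T0] exI[of _ "C * H"]) (auto simp: T0_def)
qed

(* Every orbit converges, since orbit t is a tail of the orbit of t / \<alpha>^K. *)
lemma orbit_convergent: assumes "t > 0" shows "convergent (\<lambda>k. g (orbit t k))"
proof -
  obtain T0 where T0: "\<And>t. t \<ge> T0 \<Longrightarrow> convergent (\<lambda>k. g (orbit t k))"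
    using orbit_convergent_large by blast
  have "1 < 1 / \<alpha>" using alpha by simp
  then obtain K where K: "T0 / t < (1 / \<alpha>) ^ K" using real_arch_pow by blast
  have "T0 < t * (1 / \<alpha>) ^ K" using K assms by (simp add: pos_divide_less_eq mult.commute)
  then have "convergent (\<lambda>k. g (orbit (t / \<alpha> ^ K) k))" by (intro T0) (simp add: power_one_over)
  then show ?thesis
    unfolding orbit_shift by (subst (asm) convergent_ignore_initial_segment[of "\<lambda>k. g (orbit t k)"])
qed

definition psi :: "real \<Rightarrow> real" where "psi t = lim (\<lambda>k. g (orbit t k))"

lemma psi_limit: "t > 0 \<Longrightarrow> (\<lambda>k. g (orbit t k)) \<longlonglongrightarrow> psi t"
  unfolding psi_def using orbit_convergent by (simp add: convergent_LIMSEQ_iff)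

(* The orbit of \<alpha> t is the orbit of t shifted by one step. *)
lemma psi_scale_invariant: assumes "t > 0" shows "psi (\<alpha> * t) = psi t"
proof -
  have "orbit (\<alpha> * t) (Suc k) = orbit t k" for k unfolding orbit_def using alpha by simp
  then have "(\<lambda>k. g (orbit (\<alpha> * t) (Suc k))) \<longlonglongrightarrow> psi t" using psi_limit[OF assms] by simp
  then have "(\<lambda>k. g (orbit (\<alpha> * t) k)) \<longlonglongrightarrow> psi t" by (rule LIMSEQ_imp_Suc)
  then show ?thesis unfolding psi_def by (rule limI)
qed

lemma g_floor_scaled:
  assumes q: "q > 0" "q < min s t / 2"
  shows "\<bar>g (nat \<lfloor>s / q\<rfloor>) - g (nat \<lfloor>t / q\<rfloor>)\<bar> \<le> incr_const * (\<bar>s - t\<bar> + q) / (min s t - q)"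
proof -
  define m where "m = min s t"
  have m: "m > 0" using q unfolding m_def by linarith
  have mu: "s / q \<ge> m / q" "t / q \<ge> m / q" unfolding m_def using q by (auto intro: divide_right_mono)
  have mq2: "m / q > 2" using q m by (simp add: less_divide_eq mult.commute m_def)
  define a where "a = nat \<lfloor>s / q\<rfloor>"
  define c where "c = nat \<lfloor>t / q\<rfloor>"
  have ab: "real a \<le> s / q" "real a > s / q - 1" unfolding a_def using mu mq2 by linarith+
  have cb: "real c \<le> t / q" "real c > t / q - 1" unfolding c_def using mu mq2 by linarith+
  have diff: "\<bar>real a - real c\<bar> \<le> \<bar>s - t\<bar> / q + 1"
  proof -
    have "\<bar>s / q - t / q\<bar> = \<bar>s - t\<bar> / q" using q by (simp add: diff_divide_distrib[symmetric])
    then show ?thesis using ab cb by linarith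
  qed
  have mn: "min (real a) (real c) \<ge> m / q - 1" "m / q - 1 > 0" using ab cb mu mq2 by auto
  have "\<bar>g a - g c\<bar> \<le> incr_const * \<bar>real a - real c\<bar> / min (real a) (real c)"
    by (rule g_lipschitz) (use mn in auto)
  also have "\<dots> \<le> incr_const * (\<bar>s - t\<bar> / q + 1) / min (real a) (real c)"
    using diff incr_const(1) mn by (intro divide_right_mono mult_left_mono) auto
  also have "\<dots> \<le> incr_const * (\<bar>s - t\<bar> / q + 1) / (m / q - 1)"
  proof (rule divide_left_mono)
    have "min (real a) (real c) > 0" using mn by linarith
    then show "0 < min (real a) (real c) * (m / q - 1)" using mn(2) by (rule mult_pos_pos)
  qed (use mn incr_const(1) q in auto)
  also have "\<dots> = incr_const * (\<bar>s - t\<bar> + q) / (m - q)"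
    using q m mq2 by (simp add: field_simps)
  finally show ?thesis unfolding a_def c_def m_def .
qed

(* Letting q = \<alpha>^k tend to 0 gives the Lipschitz bound for psi. *)
lemma psi_lipschitz_bound: assumes "s > 0" "t > 0"
  shows "\<bar>psi s - psi t\<bar> \<le> incr_const * \<bar>s - t\<bar> / min s t"
proof -
  have "(\<lambda>k. \<alpha> ^ k) \<longlonglongrightarrow> 0" using alpha by (intro LIMSEQ_power_zero) simp
  then have ev: "eventually (\<lambda>k. \<alpha> ^ k < min s t / 2) sequentially"
    using assms by (intro order_tendstoD) auto
  have L1: "(\<lambda>k. \<bar>g (orbit s k) - g (orbit t k)\<bar>) \<longlonglongrightarrow> \<bar>psi s - psi t\<bar>"
    by (intro tendsto_intros psi_limit assms)
  have L2: "(\<lambda>k. incr_const * (\<bar>s - t\<bar> + \<alpha> ^ k) / (min s t - \<alpha> ^ k))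
      \<longlonglongrightarrow> incr_const * (\<bar>s - t\<bar> + 0) / (min s t - 0)"
    using assms alpha by (intro tendsto_intros LIMSEQ_power_zero) auto
  have "eventually (\<lambda>k. \<bar>g (orbit s k) - g (orbit t k)\<bar>
      \<le> incr_const * (\<bar>s - t\<bar> + \<alpha> ^ k) / (min s t - \<alpha> ^ k)) sequentially"
    using ev by eventually_elim (use alpha in \<open>simp add: orbit_def g_floor_scaled\<close>)
  then show ?thesis using tendsto_le[OF _ L2 L1] by simp
qed

lemma psi_lipschitz: assumes "r > 0" shows "(incr_const / r)-lipschitz_on {r..} psi"
proof (rule lipschitz_onI)
  fix s t assume "s \<in> {r..}" "t \<in> {r..}"
  then have "\<bar>psi s - psi t\<bar> \<le> incr_const * \<bar>s - t\<bar> / min s t"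
    "incr_const * \<bar>s - t\<bar> / min s t \<le> incr_const * \<bar>s - t\<bar> / r"
    using assms incr_const(1) by (auto intro!: psi_lipschitz_bound divide_left_mono)
  then show "dist (psi s) (psi t) \<le> incr_const / r * dist s t" by (simp add: dist_real_def)
qed (use assms incr_const(1) in simp)

lemma psi_continuous: "continuous_on {0<..} psi"
proof (rule continuous_at_imp_continuous_on, intro ballI)
  fix x :: real assume "x \<in> {0<..}"
  then have x2: "x / 2 > 0" "x \<in> {x/2<..}" by auto
  have "(incr_const / (x / 2))-lipschitz_on {x/2<..} psi"
    by (rule lipschitz_on_subset[OF psi_lipschitz[OF x2(1)]]) auto
  then have "continuous_on {x/2<..} psi" by (rule lipschitz_on_continuous_on)
  then show "isCont psi x" using x2(2) continuous_on_eq_continuous_at open_greaterThan by blast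
qed

lemma psi_locally_lipschitz: "locally_lipschitz_on {0<..} psi"
  unfolding locally_lipschitz_on_def
proof
  fix x :: real assume "x \<in> {0<..}"
  then have x2: "x / 2 > 0" by simp
  have "cball x (x / 2) \<inter> {0<..} \<subseteq> {x / 2..}"
  proof
    fix y assume "y \<in> cball x (x / 2) \<inter> {0<..}"
    then have "\<bar>x - y\<bar> \<le> x / 2" by (simp add: dist_real_def)
    then have "x - y \<le> x / 2" by linarith
    then show "y \<in> {x / 2..}" by simp
  qed
  then show "\<exists>e>0. \<exists>L. L-lipschitz_on (cball x e \<inter> {0<..}) psi"
    using lipschitz_on_subset[OF psi_lipschitz[OF x2]] x2 by blast
qed

(* g(n) - psi(n) \<rightarrow> 0 by the quantitative bound of orbit_convergent_large at t = n. *)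
lemma g_minus_psi: "(\<lambda>n. g n - psi (real n)) \<longlonglongrightarrow> 0"
proof -
  obtain T0 C where C: "C \<ge> 0" and main: "\<And>t. t \<ge> T0 \<Longrightarrow>
    \<bar>lim (\<lambda>k. g (orbit t k)) - g (orbit t 0)\<bar> \<le> C * ln (t / 2) powr (-\<epsilon>/2)"
    using orbit_convergent_large by blast
  have "(\<lambda>n::nat. ln (real n / 2) powr (-\<epsilon>/2)) \<longlonglongrightarrow> 0" using eps by real_asymp
  then have lim: "(\<lambda>n::nat. C * ln (real n / 2) powr (-\<epsilon>/2)) \<longlonglongrightarrow> 0"
    using tendsto_mult_right_zero by blast
  have "eventually (\<lambda>n::nat. real n \<ge> T0) sequentially" by real_asymp
  then have "eventually (\<lambda>n. norm (g n - psi (real n)) \<le> C * ln (real n / 2) powr (-\<epsilon>/2)) sequentially"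
  proof eventually_elim
    case (elim n)
    show ?case using main[OF elim] by (simp add: psi_def orbit_def abs_minus_commute)
  qed
  then show ?thesis by (rule Lim_null_comparison[OF _ lim])
qed

end

(* Condition 1 provides explicit constants for the kernel estimates, with D = |\<delta>|. *)
lemma condition1_kernel:
  assumes "condition1 Y \<alpha>"
  obtains \<epsilon> D C1 C2 C3 N0 where "election_kernel Y \<alpha> \<epsilon> D C1 C2 C3 N0"
proof -
  note c = assms[unfolded condition1_def]
  obtain \<epsilon> \<delta> where eps: "\<epsilon> > 0"
    and O1: "\<delta> \<in> O(\<lambda>n. (ln (real n)) powr (-1 - \<epsilon>))"
    and O2: "(\<lambda>n. measure_pmf.expectation (Y (Suc n)) real - measure_pmf.expectation (Y n) real - \<alpha>) \<in> O(\<delta>)"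
    and O3: "(\<lambda>n. measure_pmf.prob (Y n) {k. \<bar>real k - \<alpha> * real n\<bar> > \<delta> n * real n})
        \<in> O(\<lambda>n. real n powr (-2 - \<epsilon>))"
    using c by blast
  obtain c1 where c1: "c1 > 0"
    and e1: "eventually (\<lambda>n. norm (\<delta> n) \<le> c1 * norm ((ln (real n)) powr (-1 - \<epsilon>))) at_top"
    using O1 by (elim landau_o.bigE)
  obtain c2 where c2: "c2 > 0" and e2: "eventually (\<lambda>n.
      norm (measure_pmf.expectation (Y (Suc n)) real - measure_pmf.expectation (Y n) real - \<alpha>)
        \<le> c2 * norm (\<delta> n)) at_top"
    using O2 by (elim landau_o.bigE)
  obtain c3 where c3: "c3 > 0" and e3: "eventually (\<lambda>n.
      norm (measure_pmf.prob (Y n) {k. \<bar>real k - \<alpha> * real n\<bar> > \<delta> n * real n})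
        \<le> c3 * norm (real n powr (-2 - \<epsilon>))) at_top"
    using O3 by (elim landau_o.bigE)
  obtain N0 where N0: "\<And>n. n \<ge> N0 \<Longrightarrow> norm (\<delta> n) \<le> c1 * norm ((ln (real n)) powr (-1 - \<epsilon>)) \<and>
      norm (measure_pmf.expectation (Y (Suc n)) real - measure_pmf.expectation (Y n) real - \<alpha>)
        \<le> c2 * norm (\<delta> n) \<and>
      norm (measure_pmf.prob (Y n) {k. \<bar>real k - \<alpha> * real n\<bar> > \<delta> n * real n})
        \<le> c3 * norm (real n powr (-2 - \<epsilon>))"
    using eventually_conj[OF e1 eventually_conj[OF e2 e3]] unfolding eventually_at_top_linorder by blast
  have "election_kernel Y \<alpha> \<epsilon> (\<lambda>n. \<bar>\<delta> n\<bar>) c2 c1 c3 N0"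
  proof
    fix n :: nat assume "n \<ge> N0"
    note bounds = N0[OF this]
    then show "measure_pmf.expectation (Y (Suc n)) real - measure_pmf.expectation (Y n) real \<le> \<alpha> + c2 * \<bar>\<delta> n\<bar>"
      and "\<bar>\<delta> n\<bar> \<le> c1 * ln (real n) powr (-1-\<epsilon>)"
      by (auto simp: abs_le_iff)
    (* a larger radius only shrinks the atypical event *)
    have "{k. \<bar>real k - \<alpha> * real n\<bar> > \<bar>\<delta> n\<bar> * real n} \<subseteq> {k. \<bar>real k - \<alpha> * real n\<bar> > \<delta> n * real n}"
    proof -
      have "\<delta> n * real n \<le> \<bar>\<delta> n\<bar> * real n" by (intro mult_right_mono) auto
      then show ?thesis by auto
    qed
    then have "measure_pmf.prob (Y n) {k. \<bar>real k - \<alpha> * real n\<bar> > \<bar>\<delta> n\<bar> * real n}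
        \<le> measure_pmf.prob (Y n) {k. \<bar>real k - \<alpha> * real n\<bar> > \<delta> n * real n}"
      by (intro measure_pmf.finite_measure_mono) auto
    then show "measure_pmf.prob (Y n) {k. \<bar>real k - \<alpha> * real n\<bar> > \<bar>\<delta> n\<bar> * real n}
        \<le> c3 * real n powr (-2-\<epsilon>)"
      using bounds by simp
  qed (use c eps c1 c2 c3 in auto)
  then show thesis by (rule that)
qed

lemma visit_prob_bounded_harmonic:
  assumes "election_kernel Y \<alpha> \<epsilon> D C1 C2 C3 N0" "a \<ge> 1"
  shows "bounded_harmonic Y \<alpha> \<epsilon> D C1 C2 C3 N0 (visit_prob Y a i) (Suc (max a i))"
proof -
  interpret election_kernel Y \<alpha> \<epsilon> D C1 C2 C3 N0 by (rule assms(1))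
  have fin: "finite (set_pmf (Y n))" if "n > a" for n
    using supp[of n] that assms(2) finite_subset by fastforce
  show ?thesis
  proof
    show "\<bar>visit_prob Y a i n\<bar> \<le> 1" for n using visit_prob_bounds[OF fin] by simp
    fix n assume "Suc (max a i) \<le> n"
    then have n: "n > a" "n \<noteq> i" "n \<ge> 1" using assms(2) by auto
    have "visit_prob Y a i n = (\<Sum>j\<in>set_pmf (Y n). pmf (Y n) j * visit_prob Y a i j)"
      by (rule visit_prob_first_step[OF fin n(2,1)])
    also have "\<dots> = (\<Sum>j\<le>n. pmf (Y n) j * visit_prob Y a i j)"
      using supp[OF n(3)] by (intro sum.mono_neutral_left) (auto simp: set_pmf_eq)
    finally show "visit_prob Y a i n = (\<Sum>j\<le>n. pmf (Y n) j * visit_prob Y a i j)" .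
  qed
qed

theorem theorem2p3:
  fixes Y :: "nat \<Rightarrow> nat pmf" and \<alpha> :: real and a :: nat
  assumes "condition1 Y \<alpha>" and "a \<ge> 1"
  shows "\<forall>i\<ge>1. \<exists>\<psi> :: real \<Rightarrow> real.
           continuous_on {0<..} \<psi> \<and> locally_lipschitz_on {0<..} \<psi> \<and>
           (\<forall>t>0. \<psi> (\<alpha> * t) = \<psi> t) \<and>
           (\<lambda>n. visit_prob Y a i n - \<psi> (real n)) \<longlonglongrightarrow> 0"
proof (intro allI impI)
  fix i :: nat
  obtain \<epsilon> D C1 C2 C3 N0 where kernel: "election_kernel Y \<alpha> \<epsilon> D C1 C2 C3 N0"
    using condition1_kernel[OF assms(1)] .
  interpret bounded_harmonic Y \<alpha> \<epsilon> D C1 C2 C3 N0 "visit_prob Y a i" "Suc (max a i)"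
    by (rule visit_prob_bounded_harmonic[OF kernel assms(2)])
  show "\<exists>\<psi> :: real \<Rightarrow> real. continuous_on {0<..} \<psi> \<and> locally_lipschitz_on {0<..} \<psi> \<and>
      (\<forall>t>0. \<psi> (\<alpha> * t) = \<psi> t) \<and> (\<lambda>n. visit_prob Y a i n - \<psi> (real n)) \<longlonglongrightarrow> 0"
    using psi_continuous psi_locally_lipschitz psi_scale_invariant g_minus_psi by blast
qed

end
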